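(* Let $f:\mathbb N\to\mathbb R$ be defined by $f(0)=0$ and $f(n)=f(n-1)+1+\frac1n\sum_{i=0}^{n-1}f(i)$ for $n>0$. Then for every $n\ge 0$, $$f(n)=\sum_{k=1}^{n}\frac{1}{k!}\binom{n}{k}.$$ *)

theory Defs
  imports Complex_Main
begin

end

theory Submission
  imports Defs
begin

text \<open>Shifting by one, g n = f n + 1 satisfies n (g n - g (n - 1)) = \<Sum>i<n. g i. The sum
  g n = \<Sum>k\<le>n. C(n,k)/k! satisfies the same relation: by the hockey-stick identity both
  sides equal \<Sum>k. C(n,k+1)/k!, and g 0 = 1 fixes the solution.\<close>

definition binomial_exp_sum :: "nat \<Rightarrow> 'a::field_char_0" where
  "binomial_exp_sum n = (\<Sum>k\<le>n. of_nat (n choose k) / fact k)"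

lemma binomial_exp_sum_upto:
  assumes "n \<le> m"
  shows "binomial_exp_sum n = (\<Sum>k\<le>m. of_nat (n choose k) / fact k)"
  unfolding binomial_exp_sum_def
  by (rule sum.mono_neutral_left) (use assms in auto)

lemma binomial_exp_sum_0 [simp]: "binomial_exp_sum 0 = 1"
  by (simp add: binomial_exp_sum_def)

lemma sum_binomial_exp_sum:
  "(\<Sum>i\<le>n. binomial_exp_sum i) = (\<Sum>k\<le>n. of_nat (Suc n choose Suc k) / fact k)"
proof -
  have "(\<Sum>i\<le>n. binomial_exp_sum i) = (\<Sum>i\<le>n. \<Sum>k\<le>n. of_nat (i choose k) / fact k)"
    by (rule sum.cong) (simp_all add: binomial_exp_sum_upto)
  also have "\<dots> = (\<Sum>k\<le>n. of_nat (\<Sum>i\<le>n. i choose k) / fact k)"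
    by (subst sum.swap) (simp add: sum_divide_distrib)
  also have "\<dots> = (\<Sum>k\<le>n. of_nat (Suc n choose Suc k) / fact k)"
    by (simp only: sum_choose_upper)
  finally show ?thesis .
qed

lemma binomial_exp_sum_Suc_diff:
  "of_nat (Suc n) * (binomial_exp_sum (Suc n) - binomial_exp_sum n)
     = (\<Sum>k\<le>n. of_nat (Suc n choose Suc k) / fact k :: 'a::field_char_0)"
proof -
  have "binomial_exp_sum (Suc n) - binomial_exp_sum n
      = (\<Sum>k\<le>Suc n. of_nat (Suc n choose k) / fact k - of_nat (n choose k) / fact k :: 'a)"
    by (simp only: binomial_exp_sum_upto[of n "Suc n", OF le_SucI, OF order_refl]
        binomial_exp_sum_def[of "Suc n"] sum_subtractf)
  also have "\<dots> = (\<Sum>k\<le>n. of_nat (n choose k) / fact (Suc k))"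
    \<comment> \<open>Pascal's rule; the terms with k = 0 cancel\<close>
    by (simp add: sum.atMost_Suc_shift add_divide_distrib del: sum.atMost_Suc)
  finally have "of_nat (Suc n) * (binomial_exp_sum (Suc n) - binomial_exp_sum n)
      = (\<Sum>k\<le>n. of_nat (Suc n * (n choose k)) / fact (Suc k) :: 'a)"
    by (simp only: sum_distrib_left times_divide_eq_right of_nat_mult)
  also have "\<dots> = (\<Sum>k\<le>n. of_nat (Suc n choose Suc k) / fact k)"
  proof (rule sum.cong)
    fix k
    show "of_nat (Suc n * (n choose k)) / fact (Suc k) = (of_nat (Suc n choose Suc k) / fact k :: 'a)"
      by (simp only: Suc_times_binomial[symmetric] fact_Suc of_nat_mult)
        (simp add: field_simps del: of_nat_Suc)
  qed simp
  finally show ?thesis .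
qed

lemma binomial_exp_sum_Suc:
  "binomial_exp_sum (Suc n)
     = binomial_exp_sum n + (\<Sum>i\<le>n. binomial_exp_sum i) / (of_nat (Suc n) :: 'a::field_char_0)"
  using binomial_exp_sum_Suc_diff[of n, where 'a = 'a]
  by (simp add: sum_binomial_exp_sum field_simps del: of_nat_Suc)

lemma binomial_exp_sum_eq_1_plus:
  "binomial_exp_sum n = 1 + (\<Sum>k=1..n. of_nat (n choose k) / fact k)"
  unfolding binomial_exp_sum_def atMost_atLeast0
  by (simp add: sum.atLeast_Suc_atMost)

theorem mainTheorem4:
  fixes f :: "nat \<Rightarrow> real"
  assumes f0: "f 0 = 0"
    and fSuc: "\<And>n. n > 0 \<Longrightarrow> f n = f (n - 1) + 1 + (1 / real n) * (\<Sum>i<n. f i)"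
  shows "\<forall>n. f n = (\<Sum>k=1..n. (1 / fact k) * real (n choose k))"
proof -
  have "f n = binomial_exp_sum n - 1" for n
  proof (induction n rule: less_induct)
    case (less n)
    show ?case
    proof (cases n)
      case 0
      then show ?thesis using f0 by simp
    next
      case (Suc p)
      have "(\<Sum>i<n. f i) = (\<Sum>i\<le>p. binomial_exp_sum i) - real n"
        using less Suc by (simp add: lessThan_Suc_atMost sum_subtractf)
      then show ?thesis
        using fSuc[of n] less[of p] Suc by (simp add: binomial_exp_sum_Suc field_simps)
    qed
  qed
  then show ?thesis by (simp add: binomial_exp_sum_eq_1_plus)
qed

end
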